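(* Let $S$ be a SAT problem on $n$ variables with clauses represented by $z_1,\dots,z_m$, and for each $j$ let $\mathcal T'_j=\{\lambda\in O(1)^n : M(z_j)\subseteq(1,\lambda)\}$. Then $S$ is unsatisfiable if and only if $\bigcup_{j=1}^m\mathcal T'_j=O(1)^n$.
   Context: $\mathbb{R}^{n,n}$ has orthonormal basis $e_1,\dots,e_{2n}$ with $e_i\cdot e_j=\delta_{ij}(-1)^{i+1}$, identified with $\mathbb{R}^n\times\mathbb{R}^n$ via $\sum_i(x_ie_{2i-1}+y_ie_{2i})\mapsto(x,y)$. Witt basis: $p_i=\tfrac12(e_{2i-1}+e_{2i})$, $q_i=\tfrac12(e_{2i-1}-e_{2i})$. For $t\in O(n)$, $(1,t):=\{(x,t(x)):x\in\mathbb{R}^n\}$; in particular $P=(1,1)=\mathrm{span}\{p_1,\dots,p_n\}$ and $(1,\lambda)$ is the image of $P$ under the isometry $\mathrm{id}\times\lambda$. $O(1)^n$ is the group of diagonal $n\times n$ matrices with entries $\pm1$. SAT encoding in the Clifford algebra $Cl(\mathbb{R}^{n,n})$: $\rho_i\mapsto q_ip_i$, $\bar\rho_i\mapsto p_iq_i$; a clause $(\ell_{j_1}\lor\dots\lor\ell_{j_k})$ on distinct variables is represented by $z=\bar\ell_{j_1}\cdots\bar\ell_{j_k}$ (product of encodings of negated literals); $M(z)$ is the span of the first vectors of the factors of $z$ (e.g. $M(q_1p_1\,p_2q_2)=\mathrm{span}\{q_1,p_2\}$). *)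

theory Defs
  imports "HOL-Analysis.Analysis"
begin

text \<open>R^{n,n} identified with R^n x R^n: the vector sum_i (x_i e_{2i-1} + y_i e_{2i}) is (x,y).
  The variable index set is the finite type 'n.\<close>

type_synonym 'n rnn = "(real^'n) \<times> (real^'n)"

text \<open>Witt basis: p_i = (e_{2i-1}+e_{2i})/2, q_i = (e_{2i-1}-e_{2i})/2.\<close>
definition pvec :: "'n::finite \<Rightarrow> 'n rnn" where
  "pvec i = ((1/2) *\<^sub>R axis i 1, (1/2) *\<^sub>R axis i 1)"

definition qvec :: "'n::finite \<Rightarrow> 'n rnn" where
  "qvec i = ((1/2) *\<^sub>R axis i 1, -((1/2) *\<^sub>R axis i 1))"

definition O1n :: "(real^'n^'n::finite) set" where
  "O1n = {l. (\<forall>i j. i \<noteq> j \<longrightarrow> l$i$j = 0) \<and> (\<forall>i. l$i$i = 1 \<or> l$i$i = -1)}"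

definition graph_space :: "real^'n^'n \<Rightarrow> 'n::finite rnn set" where
  "graph_space t = {(x, t *v x) | x. True}"

text \<open>Literals: (i, True) is the positive literal rho_i, (i, False) is bar rho_i.\<close>
type_synonym 'n literal = "'n \<times> bool"

definition neg_lit :: "'n literal \<Rightarrow> 'n literal" where
  "neg_lit l = (fst l, \<not> snd l)"

text \<open>Encoding of a literal as a Clifford product of two vectors, recorded as the
  ordered pair of factors: rho_i -> q_i p_i, bar rho_i -> p_i q_i.\<close>
definition enc_lit :: "'n::finite literal \<Rightarrow> 'n rnn \<times> 'n rnn" where
  "enc_lit l = (if snd l then (qvec (fst l), pvec (fst l)) else (pvec (fst l), qvec (fst l)))"

text \<open>A clause (l_1 or ... or l_k) is represented by z = bar l_1 ... bar l_k,
  recorded as the list of its two-vector factors.\<close>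
definition clause_rep :: "'n::finite literal list \<Rightarrow> ('n rnn \<times> 'n rnn) list" where
  "clause_rep c = map (enc_lit \<circ> neg_lit) c"

definition Mspace :: "('n::finite rnn \<times> 'n rnn) list \<Rightarrow> 'n rnn set" where
  "Mspace z = span (fst ` set z)"

definition Tprime :: "('n::finite rnn \<times> 'n rnn) list \<Rightarrow> (real^'n^'n) set" where
  "Tprime z = {l \<in> O1n. Mspace z \<subseteq> graph_space l}"

definition lit_true :: "('n \<Rightarrow> bool) \<Rightarrow> 'n literal \<Rightarrow> bool" where
  "lit_true a l = (a (fst l) = snd l)"

definition satisfiable :: "'n literal list list \<Rightarrow> bool" where
  "satisfiable S = (\<exists>a. \<forall>c \<in> set S. \<exists>l \<in> set c. lit_true a l)"

end

theory Submission
  imports Defs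
begin

text \<open>For a sign matrix \<lambda> \<in> O(1)^n the space (1,\<lambda>) contains p_i exactly when \<lambda>_ii = 1 and
  q_i exactly when \<lambda>_ii = -1. Reading \<lambda> as the assignment that makes \<rho>_i true iff
  \<lambda>_ii = -1, the first factor of the encoding of a negated literal lies in (1,\<lambda>) iff
  the literal is false. As (1,\<lambda>) is a subspace, M(z_j) \<subseteq> (1,\<lambda>) therefore says that \<lambda>
  falsifies the j-th clause, and since \<lambda> \<mapsto> assignment is a bijection between O(1)^n and
  the assignments, the sets T'_j cover O(1)^n iff every assignment falsifies some clause.\<close>

definition sign_assignment :: "real^'n^'n \<Rightarrow> 'n::finite \<Rightarrow> bool" where
  "sign_assignment l = (\<lambda>i. l$i$i = -1)"

definition sign_matrix :: "('n::finite \<Rightarrow> bool) \<Rightarrow> real^'n^'n" where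
  "sign_matrix a = (\<chi> i j. if i = j then (if a i then -1 else 1) else 0)"

lemma sign_matrix_in_O1n: "sign_matrix a \<in> O1n"
  by (auto simp: O1n_def sign_matrix_def)

lemma sign_assignment_sign_matrix: "sign_assignment (sign_matrix a) = a"
  by (auto simp: sign_assignment_def sign_matrix_def)

lemma subspace_graph_space: "subspace (graph_space (l::real^'n^'n::finite))"
proof -
  have "graph_space l = (\<lambda>x. (x, l *v x)) ` UNIV"
    by (auto simp: graph_space_def)
  moreover have "linear (\<lambda>x. (x, l *v x))"
    by (auto simp: linear_iff matrix_vector_right_distrib matrix_vector_mult_scaleR)
  ultimately show ?thesis
    by (simp add: linear_subspace_image)
qed

lemma diagonal_matrix_mult_axis:
  fixes l :: "real^'n^'n::finite"
  assumes "\<forall>i j. i \<noteq> j \<longrightarrow> l$i$j = 0"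
  shows "l *v axis i 1 = (l$i$i) *\<^sub>R axis i 1"
  unfolding matrix_vector_mult_basis using assms by (auto simp: column_def vec_eq_iff axis_def)

lemma axis_pair_in_graph_space_iff:
  fixes l :: "real^'n^'n::finite"
  assumes "\<forall>i j. i \<noteq> j \<longrightarrow> l$i$j = 0"
  shows "(c *\<^sub>R axis i 1, d *\<^sub>R axis i 1) \<in> graph_space l \<longleftrightarrow> d = l$i$i * c"
proof -
  have "(c *\<^sub>R axis i 1, d *\<^sub>R axis i 1) \<in> graph_space l
        \<longleftrightarrow> d *\<^sub>R axis i 1 = (l$i$i * c) *\<^sub>R (axis i 1 :: real^'n)"
    by (auto simp: graph_space_def matrix_vector_mult_scaleR diagonal_matrix_mult_axis[OF assms])
  also have "\<dots> \<longleftrightarrow> d = l$i$i * c"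
    by simp
  finally show ?thesis .
qed

lemma O1n_diagonal: "l \<in> O1n \<Longrightarrow> \<forall>i j. i \<noteq> j \<longrightarrow> l$i$j = 0"
  by (simp add: O1n_def)

lemma pvec_in_graph_space_iff:
  assumes "l \<in> O1n"
  shows "pvec i \<in> graph_space l \<longleftrightarrow> l$i$i = 1"
  using axis_pair_in_graph_space_iff[OF O1n_diagonal[OF assms], where c = "1/2" and d = "1/2"]
  by (simp add: pvec_def)

lemma qvec_in_graph_space_iff:
  assumes "l \<in> O1n"
  shows "qvec i \<in> graph_space l \<longleftrightarrow> l$i$i = -1"
proof -
  have "qvec i = ((1/2) *\<^sub>R axis i 1, (-1/2) *\<^sub>R axis i 1)"
    by (simp add: qvec_def)
  moreover have "-1/2 = l$i$i * (1/2) \<longleftrightarrow> l$i$i = -1"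
    by linarith
  ultimately show ?thesis
    using axis_pair_in_graph_space_iff[OF O1n_diagonal[OF assms], where c = "1/2" and d = "-1/2"]
    by (simp only:)
qed

lemma enc_neg_lit_in_graph_space_iff:
  assumes "l \<in> O1n"
  shows "fst (enc_lit (neg_lit x)) \<in> graph_space l \<longleftrightarrow> \<not> lit_true (sign_assignment l) x"
  using assms pvec_in_graph_space_iff[OF assms] qvec_in_graph_space_iff[OF assms]
  by (cases x) (auto simp: O1n_def enc_lit_def neg_lit_def lit_true_def sign_assignment_def)

lemma Mspace_subset_graph_space_iff:
  "Mspace z \<subseteq> graph_space l \<longleftrightarrow> fst ` set z \<subseteq> graph_space l"
  unfolding Mspace_def by (meson span_minimal subspace_graph_space span_superset subset_trans)

lemma Tprime_clause_rep:
  "Tprime (clause_rep c) = {l \<in> O1n. \<forall>x \<in> set c. \<not> lit_true (sign_assignment l) x}"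
  unfolding Tprime_def Mspace_subset_graph_space_iff clause_rep_def
  by (auto simp: image_subset_iff enc_neg_lit_in_graph_space_iff)

theorem proposition5:
  fixes S :: "('n::finite) literal list list"
  assumes "\<forall>c \<in> set S. distinct (map fst c)"
  shows "\<not> satisfiable S \<longleftrightarrow> (\<Union>c \<in> set S. Tprime (clause_rep c)) = O1n"
proof -
  let ?falsifies = "\<lambda>a. \<exists>c \<in> set S. \<forall>x \<in> set c. \<not> lit_true a x"
  have "(\<Union>c \<in> set S. Tprime (clause_rep c)) = O1n \<longleftrightarrow> (\<forall>l \<in> O1n. ?falsifies (sign_assignment l))"
    unfolding Tprime_clause_rep by blast
  also have "\<dots> \<longleftrightarrow> (\<forall>a. ?falsifies a)"
  proof (intro iffI allI)
    fix a
    assume "\<forall>l \<in> O1n. ?falsifies (sign_assignment l)"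
    then have "?falsifies (sign_assignment (sign_matrix a))"
      using sign_matrix_in_O1n by blast
    then show "?falsifies a"
      by (simp only: sign_assignment_sign_matrix)
  qed blast
  also have "\<dots> \<longleftrightarrow> \<not> satisfiable S"
    unfolding satisfiable_def by blast
  finally show ?thesis ..
qed

end
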